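(* For every permutation $\beta$, the set of properties $\{\operatorname{Av}(\delta) : \delta\le\beta\}$ is query-complete.
   Context: A permutation $\pi$ contains $\sigma$ (written $\sigma\le\pi$) if $\pi$ has a subsequence order-isomorphic to $\sigma$; $\operatorname{Av}(\delta)$ is the set of permutations not containing $\delta$. For $\sigma\in S_m$ and nonempty permutations $\alpha_1,\dots,\alpha_m$, the inflation $\sigma[\alpha_1,\dots,\alpha_m]$ is the permutation obtained by replacing each entry $\sigma(i)$ by an interval (contiguous positions, consecutive values) order-isomorphic to $\alpha_i$. A property is any set of permutations. A set $\mathcal{P}$ of properties is query-complete if for every permutation $\sigma\in S_m$ and every $P\in\mathcal{P}$, whether $\sigma[\alpha_1,\dots,\alpha_m]\in P$ is determined by $\sigma$ together with the knowledge, for each $i\in[m]$ and each $Q\in\mathcal{P}$, of whether $\alpha_i\in Q$. *)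

theory Defs
  imports Main
begin

(* A permutation of length n is represented as a list that is a rearrangement
   of [0..<n] (one-line notation, values 0-based). *)
definition is_perm :: "nat list \<Rightarrow> bool" where
  "is_perm p \<longleftrightarrow> distinct p \<and> set p = {0..<length p}"

definition order_iso :: "nat list \<Rightarrow> nat list \<Rightarrow> bool" where
  "order_iso xs ys \<longleftrightarrow> length xs = length ys \<and>
     (\<forall>i<length xs. \<forall>j<length xs. xs ! i < xs ! j \<longleftrightarrow> ys ! i < ys ! j)"

definition contains :: "nat list \<Rightarrow> nat list \<Rightarrow> bool" where
  "contains \<sigma> \<pi> \<longleftrightarrow> (\<exists>I. I \<subseteq> {..<length \<pi>} \<and> order_iso \<sigma> (nths \<pi> I))"

definition Av :: "nat list \<Rightarrow> nat list set" where
  "Av \<delta> = {\<pi>. is_perm \<pi> \<and> \<not> contains \<delta> \<pi>}"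

(* inflation sigma[alpha_1,...,alpha_m]: block i occupies consecutive positions
   (in order of i) and consecutive values, shifted by the total size of the
   blocks j with sigma(j) < sigma(i). *)
definition inflate :: "nat list \<Rightarrow> nat list list \<Rightarrow> nat list" where
  "inflate \<sigma> \<alpha>s = concat (map (\<lambda>i. map (\<lambda>x. x +
        (\<Sum>j\<in>{j. j < length \<sigma> \<and> \<sigma> ! j < \<sigma> ! i}. length (\<alpha>s ! j))) (\<alpha>s ! i))
     [0..<length \<sigma>])"

definition query_complete :: "nat list set set \<Rightarrow> bool" where
  "query_complete \<P> \<longleftrightarrow>
     (\<forall>\<sigma> \<alpha>s \<alpha>s'. is_perm \<sigma> \<longrightarrow>
        length \<alpha>s = length \<sigma> \<longrightarrow> length \<alpha>s' = length \<sigma> \<longrightarrow>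
        (\<forall>i<length \<sigma>. is_perm (\<alpha>s ! i) \<and> \<alpha>s ! i \<noteq> [] \<and>
                          is_perm (\<alpha>s' ! i) \<and> \<alpha>s' ! i \<noteq> []) \<longrightarrow>
        (\<forall>i<length \<sigma>. \<forall>Q\<in>\<P>. \<alpha>s ! i \<in> Q \<longleftrightarrow> \<alpha>s' ! i \<in> Q) \<longrightarrow>
        (\<forall>P\<in>\<P>. inflate \<sigma> \<alpha>s \<in> P \<longleftrightarrow> inflate \<sigma> \<alpha>s' \<in> P))"

end

(* An occurrence of delta in sigma[alpha_1, ..., alpha_m] splits into the parts lying in the
   individual blocks.  The part in block i is an occurrence in alpha_i of some pattern gamma_i
   contained in delta, while the relative order of entries in different blocks is dictated by
   sigma alone.  If delta is contained in beta, so is every gamma_i; hence whether alpha_i avoids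
   gamma_i is part of the queried data, alpha'_i contains gamma_i as well, and gluing these
   occurrences along the same assignment of entries to blocks gives an occurrence of delta in
   sigma[alpha'_1, ..., alpha'_m]. *)

theory Submission
  imports Defs
begin

(* With X = {..<length \<delta>} this is an occurrence of \<delta> in \<pi>; for smaller X it is an
   occurrence of the subpattern of \<delta> at the positions X. *)
definition embeds_on :: "nat set \<Rightarrow> nat list \<Rightarrow> nat list \<Rightarrow> (nat \<Rightarrow> nat) \<Rightarrow> bool" where
  "embeds_on X \<delta> \<pi> g \<longleftrightarrow> (\<forall>x\<in>X. g x < length \<pi>) \<and> strict_mono_on X g \<and>
     (\<forall>x\<in>X. \<forall>y\<in>X. \<delta> ! x < \<delta> ! y \<longleftrightarrow> \<pi> ! g x < \<pi> ! g y)"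

lemma nths_eq_map_nth_filter: "nths xs A = map ((!) xs) (filter (\<lambda>i. i \<in> A) [0..<length xs])"
proof -
  have "zip xs [0..<length xs] = map (\<lambda>i. (xs ! i, i)) [0..<length xs]"
    by (subst (1) map_nth[symmetric]) (simp add: zip_map1 zip_same)
  then show ?thesis
    by (simp add: nths_def filter_map comp_def)
qed

lemma nths_set_eq_map_nth:
  assumes "sorted_wrt (<) js" "set js \<subseteq> {..<length xs}"
  shows "nths xs (set js) = map ((!) xs) js"
proof -
  have "filter (\<lambda>i. i \<in> set js) [0..<length xs] = js"
    using assms by (intro strict_sorted_equal) (auto simp: sorted_wrt_filter)
  then show ?thesis
    by (simp add: nths_eq_map_nth_filter)
qed

lemma contains_iff_index_list:
  "contains \<sigma> \<pi> \<longleftrightarrow>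
     (\<exists>js. sorted_wrt (<) js \<and> set js \<subseteq> {..<length \<pi>} \<and> order_iso \<sigma> (map ((!) \<pi>) js))"
proof
  assume "contains \<sigma> \<pi>"
  then obtain I where iso: "order_iso \<sigma> (nths \<pi> I)"
    unfolding contains_def by blast
  let ?js = "filter (\<lambda>i. i \<in> I) [0..<length \<pi>]"
  have "sorted_wrt (<) ?js"
    by (simp add: sorted_wrt_filter)
  moreover have "set ?js \<subseteq> {..<length \<pi>}"
    by auto
  moreover have "order_iso \<sigma> (map ((!) \<pi>) ?js)"
    using iso by (simp add: nths_eq_map_nth_filter)
  ultimately show "\<exists>js. sorted_wrt (<) js \<and> set js \<subseteq> {..<length \<pi>} \<and> order_iso \<sigma> (map ((!) \<pi>) js)"
    by blast
next
  assume "\<exists>js. sorted_wrt (<) js \<and> set js \<subseteq> {..<length \<pi>} \<and> order_iso \<sigma> (map ((!) \<pi>) js)"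
  then obtain js where js: "sorted_wrt (<) js" "set js \<subseteq> {..<length \<pi>}"
    "order_iso \<sigma> (map ((!) \<pi>) js)"
    by blast
  then have "order_iso \<sigma> (nths \<pi> (set js))"
    by (simp add: nths_set_eq_map_nth)
  with js(2) show "contains \<sigma> \<pi>"
    unfolding contains_def by blast
qed

lemma contains_map_nth_iff_embeds_on:
  assumes "sorted_wrt (<) is"
  shows "contains (map ((!) \<delta>) is) \<pi> \<longleftrightarrow> (\<exists>g. embeds_on (set is) \<delta> \<pi> g)"
proof
  assume "contains (map ((!) \<delta>) is) \<pi>"
  then obtain js where js: "sorted_wrt (<) js" "set js \<subseteq> {..<length \<pi>}"
    "order_iso (map ((!) \<delta>) is) (map ((!) \<pi>) js)"
    unfolding contains_iff_index_list by blast
  have len: "length js = length is"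
    using js(3) by (simp add: order_iso_def)
  define g where "g x = the (map_of (zip is js) x)" for x
  have g: "g (is ! t) = js ! t" if "t < length is" for t
    using that len assms by (simp add: g_def map_of_zip_nth strict_sorted_iff)
  have "embeds_on (set is) \<delta> \<pi> g"
    unfolding embeds_on_def strict_mono_on_def
  proof (intro conjI ballI allI impI)
    fix x assume "x \<in> set is"
    then obtain t where "t < length is" "x = is ! t"
      by (auto simp: in_set_conv_nth)
    then have "g x \<in> set js"
      using g len by simp
    then show "g x < length \<pi>"
      using js(2) by auto
  next
    fix x y assume xy: "x \<in> set is \<and> y \<in> set is \<and> x < y"
    then obtain t u where tu: "t < length is" "u < length is" "x = is ! t" "y = is ! u"
      by (auto simp: in_set_conv_nth)
    have "t < u"
    proof (rule ccontr)
      assume "\<not> t < u"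
      then have "u < t \<or> u = t"
        by auto
      then have "is ! u \<le> is ! t"
        using assms tu(1) by (auto dest: sorted_wrt_nth_less)
      then show False
        using xy tu by simp
    qed
    then show "g x < g y"
      using g js(1) len tu by (simp add: sorted_wrt_nth_less)
  next
    fix x y assume "x \<in> set is" "y \<in> set is"
    then obtain t u where "t < length is" "u < length is" "x = is ! t" "y = is ! u"
      by (auto simp: in_set_conv_nth)
    then show "\<delta> ! x < \<delta> ! y \<longleftrightarrow> \<pi> ! g x < \<pi> ! g y"
      using g js(3) len by (simp add: order_iso_def)
  qed
  then show "\<exists>g. embeds_on (set is) \<delta> \<pi> g"
    by blast
next
  assume "\<exists>g. embeds_on (set is) \<delta> \<pi> g"
  then obtain g where g: "embeds_on (set is) \<delta> \<pi> g"
    by blast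
  have "sorted_wrt (\<lambda>x y. g x < g y) is"
    using assms by (rule sorted_wrt_mono_rel[rotated])
      (use g in \<open>auto simp: embeds_on_def strict_mono_on_def\<close>)
  then have "sorted_wrt (<) (map g is)"
    by (simp add: sorted_wrt_map)
  moreover have "set (map g is) \<subseteq> {..<length \<pi>}"
    using g by (auto simp: embeds_on_def)
  moreover have "order_iso (map ((!) \<delta>) is) (map ((!) \<pi>) (map g is))"
    using g by (simp add: order_iso_def embeds_on_def)
  ultimately show "contains (map ((!) \<delta>) is) \<pi>"
    unfolding contains_iff_index_list by blast
qed

lemma contains_iff_embeds_on:
  "contains \<delta> \<pi> \<longleftrightarrow> (\<exists>f. embeds_on {..<length \<delta>} \<delta> \<pi> f)"
  using contains_map_nth_iff_embeds_on[of "[0..<length \<delta>]" \<delta> \<pi>]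
  by (simp add: map_nth atLeast0LessThan)

lemma contains_nths_iff_embeds_on:
  assumes "X \<subseteq> {..<length \<delta>}"
  shows "contains (nths \<delta> X) \<pi> \<longleftrightarrow> (\<exists>g. embeds_on X \<delta> \<pi> g)"
proof -
  have "set (filter (\<lambda>i. i \<in> X) [0..<length \<delta>]) = X"
    using assms by auto
  then show ?thesis
    using contains_map_nth_iff_embeds_on[of "filter (\<lambda>i. i \<in> X) [0..<length \<delta>]" \<delta> \<pi>]
    by (simp add: nths_eq_map_nth_filter sorted_wrt_filter)
qed

lemma embeds_on_comp:
  assumes "embeds_on X \<delta> \<pi> f" "embeds_on {..<length \<pi>} \<pi> \<tau> g"
  shows "embeds_on X \<delta> \<tau> (g \<circ> f)"
  using assms by (auto simp: embeds_on_def strict_mono_on_def)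

lemma contains_trans: "contains \<delta> \<pi> \<Longrightarrow> contains \<pi> \<tau> \<Longrightarrow> contains \<delta> \<tau>"
  unfolding contains_iff_embeds_on by (metis embeds_on_comp)

lemma order_iso_trans: "order_iso xs ys \<Longrightarrow> order_iso ys zs \<Longrightarrow> order_iso xs zs"
  by (simp add: order_iso_def)

lemma order_iso_sym: "order_iso xs ys \<Longrightarrow> order_iso ys xs"
  by (auto simp: order_iso_def)

lemma contains_order_iso:
  assumes "order_iso \<sigma> \<tau>" "contains \<sigma> \<pi>"
  shows "contains \<tau> \<pi>"
proof -
  obtain I where I: "I \<subseteq> {..<length \<pi>}" "order_iso \<sigma> (nths \<pi> I)"
    using assms(2) unfolding contains_def by blast
  have "order_iso \<tau> (nths \<pi> I)"
    using order_iso_trans[OF order_iso_sym[OF assms(1)] I(2)] .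
  with I(1) show ?thesis
    unfolding contains_def by blast
qed

lemma is_permI: "distinct p \<Longrightarrow> set p \<subseteq> {0..<length p} \<Longrightarrow> is_perm p"
  by (simp add: is_perm_def card_subset_eq distinct_card)

definition standardize :: "nat list \<Rightarrow> nat list" where
  "standardize xs = map (\<lambda>x. card {y \<in> set xs. y < x}) xs"

lemma card_less_mono:
  fixes x y :: "'a :: linorder"
  assumes "finite A" "x \<in> A" "x < y"
  shows "card {z \<in> A. z < x} < card {z \<in> A. z < y}"
proof (rule psubset_card_mono)
  show "{z \<in> A. z < x} \<subset> {z \<in> A. z < y}"
    using assms(2,3) by auto
qed (use assms(1) in simp)

lemma card_less_less_iff:
  fixes x y :: "'a :: linorder"
  assumes "finite A" "x \<in> A" "y \<in> A"
  shows "card {z \<in> A. z < x} < card {z \<in> A. z < y} \<longleftrightarrow> x < y"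
  using card_less_mono[OF assms(1,2), of y] card_less_mono[OF assms(1,3), of x]
  by (metis less_asym linorder_neqE)

lemma order_iso_standardize: "order_iso (standardize xs) xs"
  unfolding order_iso_def standardize_def
proof (intro conjI allI impI)
  fix i j
  assume "i < length (map (\<lambda>x. card {y \<in> set xs. y < x}) xs)"
    and "j < length (map (\<lambda>x. card {y \<in> set xs. y < x}) xs)"
  then have "i < length xs" "j < length xs"
    by simp_all
  then show "map (\<lambda>x. card {y \<in> set xs. y < x}) xs ! i < map (\<lambda>x. card {y \<in> set xs. y < x}) xs ! j
      \<longleftrightarrow> xs ! i < xs ! j"
    by (simp only: nth_map) (intro card_less_less_iff; simp)
qed simp

lemma is_perm_standardize:
  assumes "distinct xs"
  shows "is_perm (standardize xs)"
proof -
  let ?r = "\<lambda>x. card {y \<in> set xs. y < x}"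
  have "inj_on ?r (set xs)"
  proof (rule inj_onI)
    fix x y assume "x \<in> set xs" "y \<in> set xs" "?r x = ?r y"
    then have "\<not> x < y" "\<not> y < x"
      using card_less_less_iff[of "set xs" x y] card_less_less_iff[of "set xs" y x] by auto
    then show "x = y"
      by simp
  qed
  then have dist: "distinct (standardize xs)"
    using assms by (simp add: standardize_def distinct_map)
  have "?r x < length xs" if "x \<in> set xs" for x
  proof -
    have "?r x < card (set xs)"
      using that by (intro psubset_card_mono) auto
    then show ?thesis
      using assms by (simp add: distinct_card)
  qed
  then have "set (standardize xs) \<subseteq> {0..<length (standardize xs)}"
    by (auto simp: standardize_def)
  with dist show ?thesis
    by (rule is_permI)
qed

lemma prefix_sum_add_less:
  fixes L :: "nat \<Rightarrow> nat"
  assumes "i < j" "a < L i"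
  shows "(\<Sum>k<i. L k) + a < (\<Sum>k<j. L k)"
proof -
  have "(\<Sum>k<i. L k) + a < (\<Sum>k<Suc i. L k)"
    using assms(2) by simp
  also have "\<dots> \<le> (\<Sum>k<j. L k)"
    using assms(1) by (intro sum_mono2) auto
  finally show ?thesis .
qed

lemma prefix_sum_add_less_iff:
  fixes L :: "nat \<Rightarrow> nat"
  assumes "a < L i" "b < L j"
  shows "(\<Sum>k<i. L k) + a < (\<Sum>k<j. L k) + b \<longleftrightarrow> i < j \<or> (i = j \<and> a < b)"
  using prefix_sum_add_less[of i j a L] prefix_sum_add_less[of j i b L] assms
  by (cases i j rule: linorder_cases) auto

lemma less_prefix_sum_decomp:
  fixes L :: "nat \<Rightarrow> nat"
  assumes "p < (\<Sum>k<m. L k)"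
  obtains i a where "i < m" "a < L i" "p = (\<Sum>k<i. L k) + a"
  using assms
proof (induction m)
  case (Suc m)
  show ?case
  proof (cases "p < (\<Sum>k<m. L k)")
    case True
    then show ?thesis
      using Suc.IH Suc.prems(1) less_SucI by blast
  next
    case False
    then show ?thesis
      using Suc.prems by (intro Suc.prems(1)[of m "p - (\<Sum>k<m. L k)"]) auto
  qed
qed simp

lemma length_concat_conv_sum: "length (concat Ls) = (\<Sum>k<length Ls. length (Ls ! k))"
  by (induction Ls) (auto simp del: sum.lessThan_Suc simp add: sum.lessThan_Suc_shift)

lemma nth_concat_prefix_sum:
  assumes "i < length Ls" "a < length (Ls ! i)"
  shows "concat Ls ! ((\<Sum>k<i. length (Ls ! k)) + a) = Ls ! i ! a"
  using assms
proof (induction Ls arbitrary: i)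
  case (Cons l Ls)
  show ?case
  proof (cases i)
    case 0
    then show ?thesis
      using Cons.prems by (simp add: nth_append)
  next
    case (Suc i')
    have "(\<Sum>k<i. length ((l # Ls) ! k)) = length l + (\<Sum>k<i'. length (Ls ! k))"
      unfolding Suc by (simp del: sum.lessThan_Suc add: sum.lessThan_Suc_shift)
    then show ?thesis
      using Cons Suc by (simp add: nth_append add.assoc)
  qed
qed simp

definition block_offset :: "nat list \<Rightarrow> nat list list \<Rightarrow> nat \<Rightarrow> nat" where
  "block_offset \<sigma> \<alpha>s i = (\<Sum>j\<in>{j. j < length \<sigma> \<and> \<sigma> ! j < \<sigma> ! i}. length (\<alpha>s ! j))"

definition block_start :: "nat list list \<Rightarrow> nat \<Rightarrow> nat" where
  "block_start \<alpha>s i = (\<Sum>j<i. length (\<alpha>s ! j))"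

lemma inflate_conv_block_offset:
  "inflate \<sigma> \<alpha>s = concat (map (\<lambda>i. map (\<lambda>x. x + block_offset \<sigma> \<alpha>s i) (\<alpha>s ! i)) [0..<length \<sigma>])"
  unfolding inflate_def block_offset_def ..

lemma length_inflate: "length (inflate \<sigma> \<alpha>s) = block_start \<alpha>s (length \<sigma>)"
  unfolding inflate_conv_block_offset length_concat_conv_sum block_start_def by simp

lemma nth_inflate:
  assumes "i < length \<sigma>" "a < length (\<alpha>s ! i)"
  shows "inflate \<sigma> \<alpha>s ! (block_start \<alpha>s i + a) = \<alpha>s ! i ! a + block_offset \<sigma> \<alpha>s i"
proof -
  let ?Ls = "map (\<lambda>i. map (\<lambda>x. x + block_offset \<sigma> \<alpha>s i) (\<alpha>s ! i)) [0..<length \<sigma>]"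
  have "block_start \<alpha>s i = (\<Sum>k<i. length (?Ls ! k))"
    unfolding block_start_def using assms(1) by (intro sum.cong) auto
  then show ?thesis
    unfolding inflate_conv_block_offset using nth_concat_prefix_sum[of i ?Ls a] assms by simp
qed

lemma inflate_position_decomp:
  assumes "p < length (inflate \<sigma> \<alpha>s)"
  obtains i a where "i < length \<sigma>" "a < length (\<alpha>s ! i)" "p = block_start \<alpha>s i + a"
  using assms less_prefix_sum_decomp[of p "\<lambda>j. length (\<alpha>s ! j)" "length \<sigma>"]
  unfolding length_inflate block_start_def by blast

lemma block_start_add_less_iff:
  assumes "a < length (\<alpha>s ! i)" "b < length (\<alpha>s ! j)"
  shows "block_start \<alpha>s i + a < block_start \<alpha>s j + b \<longleftrightarrow> i < j \<or> (i = j \<and> a < b)"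
  unfolding block_start_def using assms by (rule prefix_sum_add_less_iff)

lemma block_start_add_less_length_inflate:
  assumes "i < length \<sigma>" "a < length (\<alpha>s ! i)"
  shows "block_start \<alpha>s i + a < length (inflate \<sigma> \<alpha>s)"
  unfolding length_inflate block_start_def using assms by (rule prefix_sum_add_less)

lemma block_offset_add_length:
  assumes "i < length \<sigma>"
  shows "block_offset \<sigma> \<alpha>s i + length (\<alpha>s ! i) =
    (\<Sum>j\<in>insert i {j. j < length \<sigma> \<and> \<sigma> ! j < \<sigma> ! i}. length (\<alpha>s ! j))"
  unfolding block_offset_def by (subst sum.insert) auto

lemma block_offset_add_length_le:
  assumes "i < length \<sigma>" "j < length \<sigma>" "\<sigma> ! i < \<sigma> ! j"
  shows "block_offset \<sigma> \<alpha>s i + length (\<alpha>s ! i) \<le> block_offset \<sigma> \<alpha>s j"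
  unfolding block_offset_add_length[OF assms(1)]
  unfolding block_offset_def by (rule sum_mono2) (use assms in auto)

lemma block_offset_add_length_le_length_inflate:
  assumes "i < length \<sigma>"
  shows "block_offset \<sigma> \<alpha>s i + length (\<alpha>s ! i) \<le> length (inflate \<sigma> \<alpha>s)"
  unfolding block_offset_add_length[OF assms] length_inflate block_start_def
  by (rule sum_mono2) (use assms in auto)

lemma is_perm_nth_less_length: "is_perm p \<Longrightarrow> a < length p \<Longrightarrow> p ! a < length p"
  unfolding is_perm_def by (metis atLeastLessThan_iff nth_mem)

lemma inflate_nth_less_iff:
  assumes "is_perm \<sigma>" "\<forall>i<length \<sigma>. is_perm (\<alpha>s ! i)"
    and "i < length \<sigma>" "j < length \<sigma>" "a < length (\<alpha>s ! i)" "b < length (\<alpha>s ! j)"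
  shows "inflate \<sigma> \<alpha>s ! (block_start \<alpha>s i + a) < inflate \<sigma> \<alpha>s ! (block_start \<alpha>s j + b) \<longleftrightarrow>
    (if i = j then \<alpha>s ! i ! a < \<alpha>s ! i ! b else \<sigma> ! i < \<sigma> ! j)"
proof (cases "i = j")
  case False
  then have "\<sigma> ! i \<noteq> \<sigma> ! j"
    using assms(1,3,4) by (simp add: is_perm_def nth_eq_iff_index_eq)
  then consider "\<sigma> ! i < \<sigma> ! j" | "\<sigma> ! j < \<sigma> ! i"
    by linarith
  moreover have "\<alpha>s ! i ! a < length (\<alpha>s ! i)" "\<alpha>s ! j ! b < length (\<alpha>s ! j)"
    using assms by (simp_all add: is_perm_nth_less_length)
  ultimately show ?thesis
    using False block_offset_add_length_le[OF assms(3,4), of \<alpha>s]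
      block_offset_add_length_le[OF assms(4,3), of \<alpha>s]
    by cases (use assms in \<open>auto simp: nth_inflate\<close>)
qed (use assms in \<open>simp add: nth_inflate\<close>)

lemma is_perm_inflate:
  assumes \<sigma>: "is_perm \<sigma>" and perms: "\<forall>i<length \<sigma>. is_perm (\<alpha>s ! i)"
  shows "is_perm (inflate \<sigma> \<alpha>s)"
proof -
  let ?\<pi> = "inflate \<sigma> \<alpha>s"
  have "distinct ?\<pi>"
  proof (subst distinct_conv_nth, intro allI impI)
    fix p q assume "p < length ?\<pi>" "q < length ?\<pi>" "p \<noteq> q"
    obtain i a where ia: "i < length \<sigma>" "a < length (\<alpha>s ! i)" "p = block_start \<alpha>s i + a"
      using inflate_position_decomp \<open>p < length ?\<pi>\<close> by blast
    obtain j b where jb: "j < length \<sigma>" "b < length (\<alpha>s ! j)" "q = block_start \<alpha>s j + b"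
      using inflate_position_decomp \<open>q < length ?\<pi>\<close> by blast
    have "(i, a) \<noteq> (j, b)"
      using \<open>p \<noteq> q\<close> ia(3) jb(3) by auto
    then have "if i = j then \<alpha>s ! i ! a \<noteq> \<alpha>s ! i ! b else \<sigma> ! i \<noteq> \<sigma> ! j"
      using ia jb \<sigma> perms by (auto simp: is_perm_def nth_eq_iff_index_eq)
    then show "?\<pi> ! p \<noteq> ?\<pi> ! q"
      using inflate_nth_less_iff[OF \<sigma> perms ia(1) jb(1) ia(2) jb(2)]
        inflate_nth_less_iff[OF \<sigma> perms jb(1) ia(1) jb(2) ia(2)] ia(3) jb(3)
      by (auto split: if_splits)
  qed
  moreover have "set ?\<pi> \<subseteq> {0..<length ?\<pi>}"
  proof
    fix v assume "v \<in> set ?\<pi>"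
    then obtain p where "p < length ?\<pi>" "v = ?\<pi> ! p"
      by (auto simp: in_set_conv_nth)
    moreover obtain i a where "i < length \<sigma>" "a < length (\<alpha>s ! i)" "p = block_start \<alpha>s i + a"
      using inflate_position_decomp \<open>p < length ?\<pi>\<close> by blast
    ultimately show "v \<in> {0..<length ?\<pi>}"
      using is_perm_nth_less_length[of "\<alpha>s ! i" a] perms
        block_offset_add_length_le_length_inflate[of i \<sigma> \<alpha>s]
      by (auto simp: nth_inflate)
  qed
  ultimately show ?thesis
    by (rule is_permI)
qed

lemma embeds_on_cong: "(\<And>x. x \<in> X \<Longrightarrow> f x = g x) \<Longrightarrow> embeds_on X \<delta> \<pi> f \<longleftrightarrow> embeds_on X \<delta> \<pi> g"
  by (simp add: embeds_on_def strict_mono_on_def)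

lemma embeds_on_inflateD:
  assumes \<sigma>: "is_perm \<sigma>" and perms: "\<forall>i<length \<sigma>. is_perm (\<alpha>s ! i)"
    and IA: "\<forall>x\<in>X. I x < length \<sigma> \<and> A x < length (\<alpha>s ! I x)"
    and emb: "embeds_on X \<delta> (inflate \<sigma> \<alpha>s) (\<lambda>x. block_start \<alpha>s (I x) + A x)"
  shows "mono_on X I"
    and "\<forall>x\<in>X. \<forall>y\<in>X. I x \<noteq> I y \<longrightarrow> (\<delta> ! x < \<delta> ! y \<longleftrightarrow> \<sigma> ! I x < \<sigma> ! I y)"
    and "\<forall>i<length \<sigma>. embeds_on {x\<in>X. I x = i} \<delta> (\<alpha>s ! i) A"
proof -
  have strict: "I x < I y \<or> (I x = I y \<and> A x < A y)" if "x \<in> X" "y \<in> X" "x < y" for x y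
    using emb IA that block_start_add_less_iff[of "A x" \<alpha>s "I x" "A y" "I y"]
    by (auto simp: embeds_on_def strict_mono_on_def)
  have order: "\<delta> ! x < \<delta> ! y \<longleftrightarrow>
      (if I x = I y then \<alpha>s ! I x ! A x < \<alpha>s ! I x ! A y else \<sigma> ! I x < \<sigma> ! I y)"
    if "x \<in> X" "y \<in> X" for x y
    using emb IA that inflate_nth_less_iff[OF \<sigma> perms, of "I x" "I y" "A x" "A y"]
    by (simp add: embeds_on_def)
  show "mono_on X I"
    by (rule mono_onI) (metis order_le_less strict)
  show "\<forall>x\<in>X. \<forall>y\<in>X. I x \<noteq> I y \<longrightarrow> (\<delta> ! x < \<delta> ! y \<longleftrightarrow> \<sigma> ! I x < \<sigma> ! I y)"
    using order by simp
  show "\<forall>i<length \<sigma>. embeds_on {x\<in>X. I x = i} \<delta> (\<alpha>s ! i) A"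
    using IA strict order unfolding embeds_on_def strict_mono_on_def by auto (metis less_irrefl)
qed

lemma embeds_on_inflateI:
  assumes \<sigma>: "is_perm \<sigma>" and perms: "\<forall>i<length \<sigma>. is_perm (\<alpha>s ! i)"
    and IA: "\<forall>x\<in>X. I x < length \<sigma> \<and> A x < length (\<alpha>s ! I x)"
    and mono: "mono_on X I"
    and across: "\<forall>x\<in>X. \<forall>y\<in>X. I x \<noteq> I y \<longrightarrow> (\<delta> ! x < \<delta> ! y \<longleftrightarrow> \<sigma> ! I x < \<sigma> ! I y)"
    and within: "\<forall>i<length \<sigma>. embeds_on {x\<in>X. I x = i} \<delta> (\<alpha>s ! i) A"
  shows "embeds_on X \<delta> (inflate \<sigma> \<alpha>s) (\<lambda>x. block_start \<alpha>s (I x) + A x)"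
proof -
  let ?pos = "\<lambda>x. block_start \<alpha>s (I x) + A x"
  have "?pos x < ?pos y" if "x \<in> X" "y \<in> X" "x < y" for x y
  proof -
    have "I x \<le> I y"
      using mono that by (simp add: mono_onD)
    moreover have "I x = I y \<Longrightarrow> A x < A y"
      using within IA that by (auto simp: embeds_on_def strict_mono_on_def)
    ultimately show ?thesis
      using IA that block_start_add_less_iff[of "A x" \<alpha>s "I x" "A y" "I y"] by auto
  qed
  moreover have "\<delta> ! x < \<delta> ! y \<longleftrightarrow> inflate \<sigma> \<alpha>s ! ?pos x < inflate \<sigma> \<alpha>s ! ?pos y"
    if "x \<in> X" "y \<in> X" for x y
    using inflate_nth_less_iff[OF \<sigma> perms, of "I x" "I y" "A x" "A y"] across within IA that
    by (auto simp: embeds_on_def)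
  moreover have "?pos x < length (inflate \<sigma> \<alpha>s)" if "x \<in> X" for x
    using IA that by (simp add: block_start_add_less_length_inflate)
  ultimately show ?thesis
    by (simp add: embeds_on_def strict_mono_on_def)
qed

lemma contains_standardize_nths:
  assumes "X \<subseteq> {..<length \<delta>}"
  shows "contains (standardize (nths \<delta> X)) \<delta>"
  using assms order_iso_standardize unfolding contains_def by blast

lemma ex_embeds_on_iff_contains_standardize:
  assumes "X \<subseteq> {..<length \<delta>}"
  shows "(\<exists>g. embeds_on X \<delta> \<pi> g) \<longleftrightarrow> contains (standardize (nths \<delta> X)) \<pi>"
  using contains_nths_iff_embeds_on[OF assms]
    contains_order_iso[OF order_iso_standardize] contains_order_iso[OF order_iso_sym[OF order_iso_standardize]]
  by blast

lemma embeds_on_transfer: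
  assumes "X \<subseteq> {..<length \<delta>}" "distinct \<delta>"
    and "\<And>\<gamma>. is_perm \<gamma> \<Longrightarrow> contains \<gamma> \<delta> \<Longrightarrow> contains \<gamma> \<pi> \<Longrightarrow> contains \<gamma> \<pi>'"
    and "embeds_on X \<delta> \<pi> g"
  obtains g' where "embeds_on X \<delta> \<pi>' g'"
proof -
  let ?\<gamma> = "standardize (nths \<delta> X)"
  have "is_perm ?\<gamma>"
    using assms(2) by (simp add: is_perm_standardize)
  moreover have "contains ?\<gamma> \<delta>"
    using assms(1) by (rule contains_standardize_nths)
  moreover have "contains ?\<gamma> \<pi>"
    using assms(4) ex_embeds_on_iff_contains_standardize[OF assms(1)] by blast
  ultimately have "contains ?\<gamma> \<pi>'"
    by (rule assms(3))
  then show ?thesis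
    using that ex_embeds_on_iff_contains_standardize[OF assms(1)] by blast
qed

lemma embeds_on_inflate_decomp:
  assumes "embeds_on X \<delta> (inflate \<sigma> \<alpha>s) f"
  obtains I A where "\<forall>x\<in>X. I x < length \<sigma> \<and> A x < length (\<alpha>s ! I x)"
    and "embeds_on X \<delta> (inflate \<sigma> \<alpha>s) (\<lambda>x. block_start \<alpha>s (I x) + A x)"
proof -
  have "\<forall>x\<in>X. \<exists>p. fst p < length \<sigma> \<and> snd p < length (\<alpha>s ! fst p) \<and>
      f x = block_start \<alpha>s (fst p) + snd p"
    using assms inflate_position_decomp unfolding embeds_on_def by (metis fst_conv snd_conv)
  from bchoice[OF this] obtain F where F: "\<forall>x\<in>X. fst (F x) < length \<sigma> \<and>
      snd (F x) < length (\<alpha>s ! fst (F x)) \<and> f x = block_start \<alpha>s (fst (F x)) + snd (F x)"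
    by blast
  have "f x = block_start \<alpha>s (fst (F x)) + snd (F x)" if "x \<in> X" for x
    using bspec[OF F that] by (rule conjunct2[OF conjunct2])
  then have "embeds_on X \<delta> (inflate \<sigma> \<alpha>s) (\<lambda>x. block_start \<alpha>s (fst (F x)) + snd (F x))"
    using assms by (subst (asm) embeds_on_cong)
  with F show ?thesis
    using that[of "\<lambda>x. fst (F x)" "\<lambda>x. snd (F x)"] by blast
qed

lemma contains_inflate_transfer:
  assumes \<sigma>: "is_perm \<sigma>"
    and perms: "\<forall>i<length \<sigma>. is_perm (\<alpha>s ! i)" and perms': "\<forall>i<length \<sigma>. is_perm (\<alpha>s' ! i)"
    and \<delta>: "distinct \<delta>"
    and agree: "\<And>i \<gamma>. i < length \<sigma> \<Longrightarrow> is_perm \<gamma> \<Longrightarrow> contains \<gamma> \<delta> \<Longrightarrow>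
      contains \<gamma> (\<alpha>s ! i) \<Longrightarrow> contains \<gamma> (\<alpha>s' ! i)"
    and "contains \<delta> (inflate \<sigma> \<alpha>s)"
  shows "contains \<delta> (inflate \<sigma> \<alpha>s')"
proof -
  let ?X = "{..<length \<delta>}"
  obtain f where "embeds_on ?X \<delta> (inflate \<sigma> \<alpha>s) f"
    using assms(6) contains_iff_embeds_on by blast
  then obtain I A where IA: "\<forall>x\<in>?X. I x < length \<sigma> \<and> A x < length (\<alpha>s ! I x)"
    and "embeds_on ?X \<delta> (inflate \<sigma> \<alpha>s) (\<lambda>x. block_start \<alpha>s (I x) + A x)"
    by (rule embeds_on_inflate_decomp)
  then have mono: "mono_on ?X I"
    and across: "\<forall>x\<in>?X. \<forall>y\<in>?X. I x \<noteq> I y \<longrightarrow> (\<delta> ! x < \<delta> ! y \<longleftrightarrow> \<sigma> ! I x < \<sigma> ! I y)"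
    and within: "\<forall>i<length \<sigma>. embeds_on {x\<in>?X. I x = i} \<delta> (\<alpha>s ! i) A"
    using embeds_on_inflateD[OF \<sigma> perms IA] by blast+
  have "\<forall>i\<in>{..<length \<sigma>}. \<exists>g. embeds_on {x\<in>?X. I x = i} \<delta> (\<alpha>s' ! i) g"
  proof
    fix i assume "i \<in> {..<length \<sigma>}"
    then have i: "i < length \<sigma>"
      by simp
    have "{x\<in>?X. I x = i} \<subseteq> ?X"
      by blast
    from embeds_on_transfer[OF this \<delta> agree[OF i]] within i
    show "\<exists>g. embeds_on {x\<in>?X. I x = i} \<delta> (\<alpha>s' ! i) g"
      by blast
  qed
  from bchoice[OF this] obtain B
    where B: "\<forall>i\<in>{..<length \<sigma>}. embeds_on {x\<in>?X. I x = i} \<delta> (\<alpha>s' ! i) (B i)"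
    by blast
  define A' where "A' x = B (I x) x" for x
  have within': "\<forall>i<length \<sigma>. embeds_on {x\<in>?X. I x = i} \<delta> (\<alpha>s' ! i) A'"
    using B embeds_on_cong[of "{x\<in>?X. I x = i}" A' "B i" for i] by (simp add: A'_def)
  have IA': "\<forall>x\<in>?X. I x < length \<sigma> \<and> A' x < length (\<alpha>s' ! I x)"
    using IA within' unfolding embeds_on_def by blast
  have "embeds_on ?X \<delta> (inflate \<sigma> \<alpha>s') (\<lambda>x. block_start \<alpha>s' (I x) + A' x)"
    using \<sigma> perms' IA' mono across within' by (rule embeds_on_inflateI)
  then show ?thesis
    using contains_iff_embeds_on by blast
qed

theorem lemma4p1:
  assumes "is_perm \<beta>"
  shows "query_complete {Av \<delta> | \<delta>. is_perm \<delta> \<and> contains \<delta> \<beta>}"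
  unfolding query_complete_def
proof (intro allI impI ballI)
  fix \<sigma> \<alpha>s \<alpha>s' P
  assume \<sigma>: "is_perm \<sigma>"
    and perms: "\<forall>i<length \<sigma>. is_perm (\<alpha>s ! i) \<and> \<alpha>s ! i \<noteq> [] \<and> is_perm (\<alpha>s' ! i) \<and> \<alpha>s' ! i \<noteq> []"
    and agree: "\<forall>i<length \<sigma>. \<forall>Q\<in>{Av \<delta> | \<delta>. is_perm \<delta> \<and> contains \<delta> \<beta>}. \<alpha>s ! i \<in> Q \<longleftrightarrow> \<alpha>s' ! i \<in> Q"
    and "P \<in> {Av \<delta> | \<delta>. is_perm \<delta> \<and> contains \<delta> \<beta>}"
  then obtain \<delta> where P: "P = Av \<delta>" and \<delta>: "is_perm \<delta>" "contains \<delta> \<beta>"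
    by blast
  have agree_contains: "contains \<gamma> (\<alpha>s ! i) \<longleftrightarrow> contains \<gamma> (\<alpha>s' ! i)"
    if "i < length \<sigma>" "is_perm \<gamma>" "contains \<gamma> \<delta>" for i \<gamma>
  proof -
    have "Av \<gamma> \<in> {Av \<delta> | \<delta>. is_perm \<delta> \<and> contains \<delta> \<beta>}"
      using that \<delta>(2) contains_trans by blast
    then show ?thesis
      using agree perms that(1) unfolding Av_def by auto
  qed
  have "distinct \<delta>"
    using \<delta>(1) by (simp add: is_perm_def)
  then have "contains \<delta> (inflate \<sigma> \<alpha>s) \<longleftrightarrow> contains \<delta> (inflate \<sigma> \<alpha>s')"
    using contains_inflate_transfer[OF \<sigma>, of \<alpha>s \<alpha>s' \<delta>] contains_inflate_transfer[OF \<sigma>, of \<alpha>s' \<alpha>s \<delta>]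
      perms agree_contains by blast
  moreover have "is_perm (inflate \<sigma> \<alpha>s)" "is_perm (inflate \<sigma> \<alpha>s')"
    using is_perm_inflate[OF \<sigma>] perms by simp_all
  ultimately show "inflate \<sigma> \<alpha>s \<in> P \<longleftrightarrow> inflate \<sigma> \<alpha>s' \<in> P"
    unfolding P Av_def by simp
qed

end
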